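(* (i) There is a constant $C$, independent of $N_1$ and $f$, such that for every $f\in H^1(\mathscr I_p)$, $$\Big(\sum_{k=3}^{N_1-1}\Big|\int_{\mathscr I_p}f\,\beta_k\tilde\Theta_k\,d\tilde s\Big|^2\Big)^{1/2}\le C\|\partial_{\tilde s}f\|_{L^2(\mathscr I_p)}.$$ (ii) There is a constant $C$, independent of $N_1$ and $f$, such that for every $f\in W^{1,\infty}(\mathscr I_p)$ one can write, for $3\le k\le N_1-1$ and $0\le j\le N_1-1$, $$\int_{\mathscr I_p}f\,\tilde\Theta_j\,\beta_k\tilde\Theta_k\,d\tilde s=a_1\mathbb E^{(1)}_{kj}+a_2\,\beta_j\,\mathbb E^{(2)}_{kj},$$ where $\mathbb E^{(1)},\mathbb E^{(2)}$ are matrices of $\ell^2$ operator norm at most one and $|a_1|\le C\|\partial_{\tilde s}f\|_{L^\infty}$, $|a_2|\le C\|f\|_{L^\infty}$.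
   Context: Fix $R_0>0$, an integer $N_1\ge4$ and $p_0>-1/2$; let $\mathscr I_p=\mathbb R/(2\pi R_0(1+p_0)\mathbb Z)$ with coordinate $\tilde s$. Let $\Theta_0=(2\pi R_0)^{-1/2}$ and, for $k\ge1$, $\Theta_{2k-1}(s)=(2\pi R_0)^{-1/2}\cos(ks/R_0)$, $\Theta_{2k}(s)=(2\pi R_0)^{-1/2}\sin(ks/R_0)$, with $\beta_0=0$, $\beta_{2k-1}=\beta_{2k}=k$. Set $\tilde\Theta_k(\tilde s)=\Theta_k(\tilde s/(1+p_0))$ on $\mathscr I_p$. Norms on $\mathscr I_p$ are with respect to $d\tilde s$. *)

theory Defs
  imports "HOL-Analysis.Analysis"
begin

definition beta :: "nat \<Rightarrow> real" where
  "beta n = real ((n + 1) div 2)"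

definition Theta :: "real \<Rightarrow> nat \<Rightarrow> real \<Rightarrow> real" where
  "Theta R0 n s =
     (if n = 0 then 1 / sqrt (2 * pi * R0)
      else if odd n then cos (beta n * s / R0) / sqrt (2 * pi * R0)
      else sin (beta n * s / R0) / sqrt (2 * pi * R0))"

definition Lp :: "real \<Rightarrow> real \<Rightarrow> real" where
  "Lp R0 p0 = 2 * pi * R0 * (1 + p0)"

definition Theta_t :: "real \<Rightarrow> real \<Rightarrow> nat \<Rightarrow> real \<Rightarrow> real" where
  "Theta_t R0 p0 n st = Theta R0 n (st / (1 + p0))"

text \<open>f is an L-periodic function with a derivative g in the sense that
  f b - f a = integral of g over [a,b] (absolute continuity / weak derivative).\<close>
definition periodic_with_deriv :: "real \<Rightarrow> (real \<Rightarrow> real) \<Rightarrow> (real \<Rightarrow> real) \<Rightarrow> bool" where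
  "periodic_with_deriv L f g \<longleftrightarrow>
     (\<forall>x. f (x + L) = f x) \<and> (\<forall>a b. a \<le> b \<longrightarrow> (g has_integral (f b - f a)) {a..b})"

definition H1_circle :: "real \<Rightarrow> (real \<Rightarrow> real) \<Rightarrow> (real \<Rightarrow> real) \<Rightarrow> bool" where
  "H1_circle L f g \<longleftrightarrow> periodic_with_deriv L f g \<and> (\<lambda>x. (g x)\<^sup>2) integrable_on {0..L}"

definition L2norm_circle :: "real \<Rightarrow> (real \<Rightarrow> real) \<Rightarrow> real" where
  "L2norm_circle L g = sqrt (integral {0..L} (\<lambda>x. (g x)\<^sup>2))"

definition opnorm_le1 :: "nat set \<Rightarrow> nat set \<Rightarrow> (nat \<Rightarrow> nat \<Rightarrow> real) \<Rightarrow> bool" where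
  "opnorm_le1 K J E \<longleftrightarrow>
     (\<forall>x :: nat \<Rightarrow> real. (\<Sum>k\<in>K. (\<Sum>j\<in>J. E k j * x j)\<^sup>2) \<le> (\<Sum>j\<in>J. (x j)\<^sup>2))"

end

theory Submission
  imports Defs
begin

(*
  The derivative of the mode Theta_k is +/- beta_k / (R0 (1 + p0)) times its partner, the mode
  of the same frequency with cosine and sine exchanged, and the modes are orthogonal with
  squared norms at most 1 + p0.

  (i) Integrating by parts, the coefficient of f against beta_k Theta_k is, up to sign and the
  factor R0 (1 + p0), the coefficient of f' against the partner of Theta_k. Bessel's inequality
  bounds the sum of their squares by (1 + p0) times the squared L^2 norm of f'.

  (ii) Integrating by parts against Theta_j Theta_k', with k' the partner of k, expresses the
  integral of f Theta_j beta_k Theta_k through the matrices of integrals of f' Theta_j Theta_k'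
  and of beta_j f Theta_j' Theta_k'. A matrix of integrals of u Theta_(sigma j) Theta_(tau k),
  with sigma, tau injective and |u| <= U, has l^2 operator norm at most (1 + p0) U: apply
  Bessel's inequality to u times the sum of x_j Theta_(sigma j).

  As f is only absolutely continuous, integration by parts is derived from Fubini's theorem on
  a triangle.
*)

section \<open>Integration by parts for absolutely continuous functions\<close>

lemma sigma_finite_lebesgue_real: "sigma_finite_measure (lebesgue :: real measure)"
  unfolding sigma_finite_measure_def
proof (intro exI[of _ "range (\<lambda>n::nat. {-real n..real n})"] conjI)
  have "\<exists>n::nat. x \<in> {-real n..real n}" for x :: real
  proof -
    obtain n :: nat where "\<bar>x\<bar> \<le> real n"
      using real_arch_simple by blast
    then have "x \<in> {-real n..real n}" by (auto simp: abs_le_iff)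
    then show ?thesis ..
  qed
  then show "\<Union> (range (\<lambda>n::nat. {-real n..real n})) = space lebesgue"
    by auto
qed auto

interpretation lebesgue_real: sigma_finite_measure "lebesgue :: real measure"
  by (rule sigma_finite_lebesgue_real)

interpretation lebesgue_real_pair: pair_sigma_finite "lebesgue :: real measure" "lebesgue :: real measure" ..

lemma lebesgue_integral_indicator_eq_integral:
  fixes f :: "real \<Rightarrow> real"
  assumes "set_integrable lebesgue S f"
  shows "(\<integral>x. indicator S x * f x \<partial>lebesgue) = integral S f"
  using set_lebesgue_integral_eq_integral(2)[OF assms] by (simp add: set_lebesgue_integral_def)

lemma integrable_pair_lebesgue_triangle:
  fixes G P :: "real \<Rightarrow> real"
  assumes G: "integrable lebesgue G" and P: "integrable lebesgue P"
  shows "integrable (lebesgue \<Otimes>\<^sub>M lebesgue) (\<lambda>(t, s). G t * P s * of_bool (t \<le> s))"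
proof (rule Bochner_Integration.integrable_bound)
  have [measurable]: "G \<in> borel_measurable lebesgue" "P \<in> borel_measurable lebesgue"
    using G P by (simp_all add: borel_measurable_integrable)
  have [measurable]: "fst \<in> borel_measurable (lebesgue \<Otimes>\<^sub>M lebesgue :: (real \<times> real) measure)"
    "snd \<in> borel_measurable (lebesgue \<Otimes>\<^sub>M lebesgue :: (real \<times> real) measure)"
    using measurable_comp[OF measurable_fst id_borel_measurable_lebesgue]
      measurable_comp[OF measurable_snd id_borel_measurable_lebesgue] by simp_all
  show "integrable (lebesgue \<Otimes>\<^sub>M lebesgue) (\<lambda>(t, s). \<bar>G t\<bar> * \<bar>P s\<bar>)"
    by (rule lebesgue_real_pair.Fubini_integrable) (use G P in auto)
  show "(\<lambda>(t, s). G t * P s * of_bool (t \<le> s)) \<in> borel_measurable (lebesgue \<Otimes>\<^sub>M lebesgue)"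
    unfolding split_beta' by measurable
qed (auto simp: abs_mult)

text \<open>Both integrals equal the integral of \<open>G t * P s\<close> over the triangle \<open>a \<le> t \<le> s \<le> b\<close>.\<close>

lemma integral_swap_triangle:
  fixes G P :: "real \<Rightarrow> real"
  assumes G: "G absolutely_integrable_on {a..b}" and P: "P absolutely_integrable_on {a..b}"
  shows "(\<lambda>s. P s * integral {a..s} G) integrable_on {a..b}"
    and "(\<lambda>t. G t * integral {t..b} P) integrable_on {a..b}"
    and "integral {a..b} (\<lambda>s. P s * integral {a..s} G) = integral {a..b} (\<lambda>t. G t * integral {t..b} P)"
proof -
  define G' where "G' = (\<lambda>t. indicator {a..b} t * G t)"
  define P' where "P' = (\<lambda>s. indicator {a..b} s * P s)"
  define F where "F t s = G' t * P' s * of_bool (t \<le> s)" for t s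
  have Fi: "integrable (lebesgue \<Otimes>\<^sub>M lebesgue) (\<lambda>(t, s). F t s)"
    unfolding F_def using G P
    by (intro integrable_pair_lebesgue_triangle) (simp_all add: set_integrable_def G'_def P'_def)
  have inner_t: "(\<integral>t. F t s \<partial>lebesgue) = P' s * integral {a..s} G" for s
  proof -
    have "(\<integral>t. F t s \<partial>lebesgue) = (\<integral>t. P' s * (indicator {a..s} t * G t) \<partial>lebesgue)"
      by (rule Bochner_Integration.integral_cong) (auto simp: F_def G'_def P'_def indicator_def)
    also have "\<dots> = P' s * (\<integral>t. indicator {a..s} t * G t \<partial>lebesgue)"
      by simp
    also have "\<dots> = P' s * integral {a..s} G"
      by (cases "s \<in> {a..b}") (auto simp: P'_def intro!: lebesgue_integral_indicator_eq_integral set_integrable_subset[OF G])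
    finally show ?thesis .
  qed
  have inner_s: "(\<integral>s. F t s \<partial>lebesgue) = G' t * integral {t..b} P" for t
  proof -
    have "(\<integral>s. F t s \<partial>lebesgue) = (\<integral>s. G' t * (indicator {t..b} s * P s) \<partial>lebesgue)"
      by (rule Bochner_Integration.integral_cong) (auto simp: F_def G'_def P'_def indicator_def)
    also have "\<dots> = G' t * (\<integral>s. indicator {t..b} s * P s \<partial>lebesgue)"
      by simp
    also have "\<dots> = G' t * integral {t..b} P"
      by (cases "t \<in> {a..b}") (auto simp: G'_def intro!: lebesgue_integral_indicator_eq_integral set_integrable_subset[OF P])
    finally show ?thesis .
  qed
  have "integrable lebesgue (\<lambda>s. \<integral>t. F t s \<partial>lebesgue)" "integrable lebesgue (\<lambda>t. \<integral>s. F t s \<partial>lebesgue)"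
    using lebesgue_real_pair.integrable_snd[OF Fi] lebesgue_real_pair.integrable_fst[OF Fi] by auto
  then have int_t: "set_integrable lebesgue {a..b} (\<lambda>s. P s * integral {a..s} G)"
    and int_s: "set_integrable lebesgue {a..b} (\<lambda>t. G t * integral {t..b} P)"
    unfolding inner_t inner_s by (simp_all add: set_integrable_def P'_def G'_def mult.assoc)
  then show "(\<lambda>s. P s * integral {a..s} G) integrable_on {a..b}"
    and "(\<lambda>t. G t * integral {t..b} P) integrable_on {a..b}"
    by (simp_all add: set_lebesgue_integral_eq_integral(1))
  have "(\<integral>s. P' s * integral {a..s} G \<partial>lebesgue) = (\<integral>t. G' t * integral {t..b} P \<partial>lebesgue)"
    using lebesgue_real_pair.Fubini_integral[OF Fi] by (simp add: inner_t inner_s)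
  then show "integral {a..b} (\<lambda>s. P s * integral {a..s} G) = integral {a..b} (\<lambda>t. G t * integral {t..b} P)"
    using int_t int_s
    by (simp add: lebesgue_integral_indicator_eq_integral[symmetric] P'_def G'_def mult.assoc)
qed

lemma integration_by_parts_indefinite_integral:
  fixes f g p p' :: "real \<Rightarrow> real"
  assumes "a \<le> b"
    and f: "\<And>x. x \<in> {a..b} \<Longrightarrow> (g has_integral (f x - f a)) {a..x}"
    and g: "g absolutely_integrable_on {a..b}"
    and p: "\<And>x. x \<in> {a..b} \<Longrightarrow> (p has_real_derivative p' x) (at x within {a..b})"
    and p': "continuous_on {a..b} p'"
  shows "integral {a..b} (\<lambda>x. p' x * f x) = f b * p b - f a * p a - integral {a..b} (\<lambda>x. g x * p x)"
proof -
  have ftc: "(p' has_integral (p b - p t)) {t..b}" if "t \<in> {a..b}" for t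
    using that by (intro fundamental_theorem_of_calculus)
      (auto simp: has_real_derivative_iff_has_vector_derivative[symmetric]
            intro: DERIV_subset[OF p])
  have p'_abs: "p' absolutely_integrable_on {a..b}"
    by (rule absolutely_integrable_continuous_real[OF p'])
  define I where "I = integral {a..b} (\<lambda>s. p' s * integral {a..s} g)"
  note swap = integral_swap_triangle[OF g p'_abs]
  have "((\<lambda>s. p' s * integral {a..s} g) has_integral I) {a..b}"
    unfolding I_def by (rule integrable_integral[OF swap(1)])
  moreover have "((\<lambda>t. g t * integral {t..b} p') has_integral I) {a..b}"
    unfolding I_def swap(3) by (rule integrable_integral[OF swap(2)])
  ultimately have pf: "((\<lambda>s. p' s * (f s - f a)) has_integral I) {a..b}"
    and gp: "((\<lambda>t. g t * (p b - p t)) has_integral I) {a..b}"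
    by (auto intro: has_integral_eq[rotated] simp: integral_unique[OF f] integral_unique[OF ftc])
  have "((\<lambda>s. p' s * (f s - f a) + f a * p' s) has_integral (I + f a * (p b - p a))) {a..b}"
    using \<open>a \<le> b\<close> by (intro has_integral_add pf has_integral_mult_right ftc) auto
  then have "integral {a..b} (\<lambda>x. p' x * f x) = I + f a * (p b - p a)"
    by (simp add: algebra_simps integral_unique)
  moreover have "((\<lambda>t. p b * g t - g t * (p b - p t)) has_integral (p b * (f b - f a) - I)) {a..b}"
    using \<open>a \<le> b\<close> by (intro has_integral_diff gp has_integral_mult_right f) auto
  then have "integral {a..b} (\<lambda>x. g x * p x) = p b * (f b - f a) - I"
    by (simp add: algebra_simps integral_unique)
  ultimately show ?thesis
    by (simp add: algebra_simps)
qed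

lemma continuous_on_primitive:
  fixes f g :: "real \<Rightarrow> real"
  assumes fg: "\<And>x. x \<in> {a..b} \<Longrightarrow> (g has_integral (f x - f a)) {a..x}"
  shows "continuous_on {a..b} f"
proof (cases "a \<le> b")
  case True
  then have "g integrable_on {a..b}"
    using fg[of b] by auto
  then have "continuous_on {a..b} (\<lambda>x. f a + integral {a..x} g)"
    by (intro continuous_intros indefinite_integral_continuous_1)
  moreover have "f a + integral {a..x} g = f x" if "x \<in> {a..b}" for x
    using integral_unique[OF fg[OF that]] by simp
  ultimately show ?thesis
    using continuous_on_eq by blast
qed simp

lemma periodic_integration_by_parts:
  fixes f g p p' :: "real \<Rightarrow> real"
  assumes "0 \<le> L" and fg: "periodic_with_deriv L f g" and g: "g absolutely_integrable_on {0..L}"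
    and p: "\<And>x. x \<in> {0..L} \<Longrightarrow> (p has_real_derivative p' x) (at x within {0..L})"
    and p': "continuous_on {0..L} p'" and "p L = p 0"
  shows "integral {0..L} (\<lambda>x. p' x * f x) = - integral {0..L} (\<lambda>x. g x * p x)"
proof -
  have "f L = f 0"
    using fg unfolding periodic_with_deriv_def by (metis add_0)
  moreover have "(g has_integral (f x - f 0)) {0..x}" if "x \<in> {0..L}" for x
    using fg that by (simp add: periodic_with_deriv_def)
  then have "integral {0..L} (\<lambda>x. p' x * f x) = f L * p L - f 0 * p 0 - integral {0..L} (\<lambda>x. g x * p x)"
    by (rule integration_by_parts_indefinite_integral[OF \<open>0 \<le> L\<close> _ g p p'])
  ultimately show ?thesis
    using \<open>p L = p 0\<close> by simp
qed

section \<open>Integrability, orthogonal families and operator norms\<close>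

lemma square_integrable_imp_absolutely_integrable:
  fixes g :: "real \<Rightarrow> real"
  assumes "g \<in> borel_measurable (lebesgue_on {a..b})" and "(\<lambda>x. (g x)\<^sup>2) integrable_on {a..b}"
  shows "g absolutely_integrable_on {a..b}"
proof (rule measurable_bounded_by_integrable_imp_absolutely_integrable[OF assms(1)])
  show "(\<lambda>x. (1 + (g x)\<^sup>2) / 2) integrable_on {a..b}"
    using assms(2) by (intro integrable_on_divide integrable_add) auto
  show "norm (g x) \<le> (1 + (g x)\<^sup>2) / 2" for x
    using sum_squares_bound[of 1 "\<bar>g x\<bar>"] by (simp add: power2_eq_square)
qed auto

lemma integrable_bounded_measurable_mult_continuous:
  fixes u v :: "real \<Rightarrow> real"
  assumes u: "u \<in> borel_measurable (lebesgue_on {a..b})" and bound: "\<And>s. s \<in> {a..b} \<Longrightarrow> \<bar>u s\<bar> \<le> U"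
    and v: "continuous_on {a..b} v"
  shows "(\<lambda>s. u s * v s) integrable_on {a..b}"
proof -
  have "bounded (u ` {a..b})"
    unfolding bounded_iff by (rule exI[of _ U]) (use bound in auto)
  then have "(\<lambda>s. u s * v s) absolutely_integrable_on {a..b}"
    by (intro absolutely_integrable_bounded_measurable_product_real[OF u] absolutely_integrable_continuous_real v) auto
  then show ?thesis
    using set_lebesgue_integral_eq_integral(1) by blast
qed

lemma integral_square_bounded_mult_le:
  fixes u h :: "real \<Rightarrow> real"
  assumes u: "u \<in> borel_measurable (lebesgue_on {a..b})" and bound: "\<And>s. s \<in> {a..b} \<Longrightarrow> \<bar>u s\<bar> \<le> U"
    and h: "continuous_on {a..b} h"
  shows "(\<lambda>s. (u s * h s)\<^sup>2) integrable_on {a..b}"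
    and "integral {a..b} (\<lambda>s. (u s * h s)\<^sup>2) \<le> U\<^sup>2 * integral {a..b} (\<lambda>s. (h s)\<^sup>2)"
proof -
  have u2: "(u s)\<^sup>2 \<le> U\<^sup>2" if "s \<in> {a..b}" for s
    using power_mono[OF bound[OF that] abs_ge_zero, of 2] by simp
  have "(\<lambda>s. (u s)\<^sup>2) \<in> borel_measurable (lebesgue_on {a..b})"
    using u by measurable
  then have "(\<lambda>s. (u s)\<^sup>2 * (h s)\<^sup>2) integrable_on {a..b}"
    by (rule integrable_bounded_measurable_mult_continuous[where U = "U\<^sup>2"]) (simp_all add: u2 continuous_intros h)
  then show uh2: "(\<lambda>s. (u s * h s)\<^sup>2) integrable_on {a..b}"
    by (simp add: power_mult_distrib)
  have "integral {a..b} (\<lambda>s. (u s * h s)\<^sup>2) \<le> integral {a..b} (\<lambda>s. U\<^sup>2 * (h s)\<^sup>2)"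
    using u2 by (intro integral_le uh2 integrable_continuous_interval continuous_intros h)
      (simp add: power_mult_distrib mult_right_mono)
  then show "integral {a..b} (\<lambda>s. (u s * h s)\<^sup>2) \<le> U\<^sup>2 * integral {a..b} (\<lambda>s. (h s)\<^sup>2)"
    by simp
qed

lemma integrable_absolutely_integrable_mult_continuous:
  fixes g v :: "real \<Rightarrow> real"
  assumes g: "g absolutely_integrable_on {a..b}" and v: "continuous_on {a..b} v"
  shows "(\<lambda>s. g s * v s) integrable_on {a..b}"
proof -
  have "bounded (v ` {a..b})"
    by (intro compact_imp_bounded compact_continuous_image v) auto
  then have "(\<lambda>s. v s * g s) absolutely_integrable_on {a..b}"
    by (intro absolutely_integrable_bounded_measurable_product_real[OF _ _ _ g]
        continuous_imp_measurable_on_sets_lebesgue v) auto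
  then show ?thesis
    using set_lebesgue_integral_eq_integral(1) by (simp add: mult.commute)
qed

lemma negligible_if_AE_lborel:
  fixes P :: "'a::euclidean_space \<Rightarrow> bool"
  assumes "AE x in lborel. P x"
  shows "negligible {x. \<not> P x}"
proof -
  obtain N where "negligible N" "{x. \<not> P x} \<subseteq> N"
    using AE_completion[OF assms] by (auto simp: eventually_ae_filter_negligible)
  then show ?thesis
    by (rule negligible_subset)
qed

lemma AE_abs_le_imp_nonneg:
  fixes g :: "'a::euclidean_space \<Rightarrow> real"
  assumes "AE x in lborel. \<bar>g x\<bar> \<le> M"
  shows "0 \<le> M"
proof (rule ccontr)
  assume "\<not> 0 \<le> M"
  then have "{x. \<not> \<bar>g x\<bar> \<le> M} = UNIV"
    by auto
  then show False
    using negligible_if_AE_lborel[OF assms] by simp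
qed

lemma periodic_with_deriv_bounded_deriv:
  assumes fg: "periodic_with_deriv L f g" and g_bound: "AE x in lborel. \<bar>g x\<bar> \<le> M"
  shows "\<exists>g'. periodic_with_deriv L f g' \<and> (\<forall>x. \<bar>g' x\<bar> \<le> M)"
proof (intro exI conjI allI)
  let ?g' = "\<lambda>x. if \<bar>g x\<bar> \<le> M then g x else 0"
  show "periodic_with_deriv L f ?g'"
    using fg negligible_if_AE_lborel[OF g_bound] unfolding periodic_with_deriv_def
    by (auto intro: has_integral_spike)
  show "\<bar>?g' x\<bar> \<le> M" for x
    using AE_abs_le_imp_nonneg[OF g_bound] by simp
qed

lemma integral_square_orthogonal_sum:
  fixes e :: "'i \<Rightarrow> real \<Rightarrow> real"
  assumes "finite J"
    and int: "\<And>m n. m \<in> J \<Longrightarrow> n \<in> J \<Longrightarrow> (\<lambda>s. e m s * e n s) integrable_on S"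
    and orth: "\<And>m n. m \<in> J \<Longrightarrow> n \<in> J \<Longrightarrow> integral S (\<lambda>s. e m s * e n s) = (if m = n then \<nu> m else 0)"
  shows "integral S (\<lambda>s. (\<Sum>j\<in>J. a j * e j s)\<^sup>2) = (\<Sum>j\<in>J. (a j)\<^sup>2 * \<nu> j)"
proof -
  have int2: "(\<lambda>s. k * (e m s * e n s)) integrable_on S" if "m \<in> J" "n \<in> J" for k m n
    using int[OF that] by (rule integrable_on_mult_right)
  have "integral S (\<lambda>s. (\<Sum>j\<in>J. a j * e j s)\<^sup>2)
      = integral S (\<lambda>s. \<Sum>m\<in>J. \<Sum>n\<in>J. a m * a n * (e m s * e n s))"
    by (simp add: power2_eq_square sum_product ac_simps)
  also have "\<dots> = (\<Sum>m\<in>J. \<Sum>n\<in>J. a m * a n * integral S (\<lambda>s. e m s * e n s))"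
    using \<open>finite J\<close> int2 by (simp add: integral_sum integrable_sum)
  also have "\<dots> = (\<Sum>j\<in>J. (a j)\<^sup>2 * \<nu> j)"
    using \<open>finite J\<close> by (simp add: orth power2_eq_square if_distrib cong: if_cong)
  finally show ?thesis .
qed

lemma integral_square_diff_orthogonal_projection:
  fixes e :: "'i \<Rightarrow> real \<Rightarrow> real" and F :: "real \<Rightarrow> real"
  assumes "finite J"
    and int: "\<And>m n. m \<in> J \<Longrightarrow> n \<in> J \<Longrightarrow> (\<lambda>s. e m s * e n s) integrable_on S"
    and orth: "\<And>m n. m \<in> J \<Longrightarrow> n \<in> J \<Longrightarrow> integral S (\<lambda>s. e m s * e n s) = (if m = n then \<nu> m else 0)"
    and F2: "(\<lambda>s. (F s)\<^sup>2) integrable_on S"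
    and Fe: "\<And>m. m \<in> J \<Longrightarrow> (\<lambda>s. F s * e m s) integrable_on S"
    and c: "\<And>m. m \<in> J \<Longrightarrow> integral S (\<lambda>s. F s * e m s) = c m * \<nu> m"
  shows "(\<lambda>s. (F s - (\<Sum>m\<in>J. c m * e m s))\<^sup>2) integrable_on S"
    and "integral S (\<lambda>s. (F s - (\<Sum>m\<in>J. c m * e m s))\<^sup>2)
           = integral S (\<lambda>s. (F s)\<^sup>2) - (\<Sum>m\<in>J. (c m)\<^sup>2 * \<nu> m)"
proof -
  define P where "P s = (\<Sum>m\<in>J. c m * e m s)" for s
  have FP_eq: "F s * P s = (\<Sum>m\<in>J. c m * (F s * e m s))" for s
    by (simp add: P_def sum_distrib_left ac_simps)
  have FP_int: "(\<lambda>s. F s * P s) integrable_on S"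
    unfolding FP_eq using \<open>finite J\<close> Fe by (auto intro!: integrable_sum integrable_on_mult_right)
  have "integral S (\<lambda>s. F s * P s) = (\<Sum>m\<in>J. c m * integral S (\<lambda>s. F s * e m s))"
    unfolding FP_eq using \<open>finite J\<close> Fe
    by (subst integral_sum) (auto intro!: sum.cong integrable_on_mult_right)
  then have FP: "integral S (\<lambda>s. F s * P s) = (\<Sum>m\<in>J. (c m)\<^sup>2 * \<nu> m)"
    by (simp add: c power2_eq_square mult.assoc cong: sum.cong)
  have "(P s)\<^sup>2 = (\<Sum>m\<in>J. \<Sum>n\<in>J. c m * c n * (e m s * e n s))" for s
    by (simp add: P_def power2_eq_square sum_product ac_simps)
  then have P2_int: "(\<lambda>s. (P s)\<^sup>2) integrable_on S"
    using \<open>finite J\<close> int by (auto intro!: integrable_sum integrable_on_mult_right)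
  have P2: "integral S (\<lambda>s. (P s)\<^sup>2) = (\<Sum>m\<in>J. (c m)\<^sup>2 * \<nu> m)"
    unfolding P_def by (rule integral_square_orthogonal_sum[OF \<open>finite J\<close> int orth])
  have diff_eq: "(\<lambda>s. (F s - P s)\<^sup>2) = (\<lambda>s. ((F s)\<^sup>2 - 2 * (F s * P s)) + (P s)\<^sup>2)"
    by (simp add: power2_diff algebra_simps)
  have F_2FP: "(\<lambda>s. (F s)\<^sup>2 - 2 * (F s * P s)) integrable_on S"
    by (intro integrable_diff F2 integrable_on_mult_right FP_int)
  show "(\<lambda>s. (F s - (\<Sum>m\<in>J. c m * e m s))\<^sup>2) integrable_on S"
    unfolding P_def[symmetric] diff_eq by (intro integrable_add F_2FP P2_int)
  show "integral S (\<lambda>s. (F s - (\<Sum>m\<in>J. c m * e m s))\<^sup>2)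
      = integral S (\<lambda>s. (F s)\<^sup>2) - (\<Sum>m\<in>J. (c m)\<^sup>2 * \<nu> m)"
    unfolding P_def[symmetric] diff_eq integral_add[OF F_2FP P2_int] integral_diff[OF F2 integrable_on_mult_right[OF FP_int]]
    by (simp add: FP P2)
qed

lemma bessel_inequality:
  fixes e :: "'i \<Rightarrow> real \<Rightarrow> real" and F :: "real \<Rightarrow> real"
  assumes "finite J"
    and int: "\<And>m n. m \<in> J \<Longrightarrow> n \<in> J \<Longrightarrow> (\<lambda>s. e m s * e n s) integrable_on S"
    and orth: "\<And>m n. m \<in> J \<Longrightarrow> n \<in> J \<Longrightarrow> integral S (\<lambda>s. e m s * e n s) = (if m = n then \<nu> m else 0)"
    and pos: "\<And>m. m \<in> J \<Longrightarrow> 0 < \<nu> m"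
    and F2: "(\<lambda>s. (F s)\<^sup>2) integrable_on S"
    and Fe: "\<And>m. m \<in> J \<Longrightarrow> (\<lambda>s. F s * e m s) integrable_on S"
  shows "(\<Sum>m\<in>J. (integral S (\<lambda>s. F s * e m s))\<^sup>2 / \<nu> m) \<le> integral S (\<lambda>s. (F s)\<^sup>2)"
proof -
  define c where "c m = integral S (\<lambda>s. F s * e m s) / \<nu> m" for m
  have c: "integral S (\<lambda>s. F s * e m s) = c m * \<nu> m" if "m \<in> J" for m
    using pos[OF that] by (simp add: c_def)
  note projection = integral_square_diff_orthogonal_projection[OF \<open>finite J\<close> int orth F2 Fe c]
  have "0 \<le> integral S (\<lambda>s. (F s - (\<Sum>m\<in>J. c m * e m s))\<^sup>2)"
    using projection(1) by (rule integral_nonneg) simp_all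
  also have "\<dots> = integral S (\<lambda>s. (F s)\<^sup>2) - (\<Sum>m\<in>J. (c m)\<^sup>2 * \<nu> m)"
    using projection(2) by simp
  also have "(\<Sum>m\<in>J. (c m)\<^sup>2 * \<nu> m) = (\<Sum>m\<in>J. (integral S (\<lambda>s. F s * e m s))\<^sup>2 / \<nu> m)"
    using pos by (intro sum.cong) (simp_all add: c power2_eq_square)
  finally show ?thesis
    by simp
qed

lemma opnorm_le1_factor:
  fixes M :: "nat \<Rightarrow> nat \<Rightarrow> real"
  assumes "finite K" "finite J" "0 \<le> l"
    and bound: "\<And>x. (\<Sum>k\<in>K. (\<Sum>j\<in>J. M k j * x j)\<^sup>2) \<le> l\<^sup>2 * (\<Sum>j\<in>J. (x j)\<^sup>2)"
  shows "\<exists>E. opnorm_le1 K J E \<and> (\<forall>k\<in>K. \<forall>j\<in>J. M k j = l * E k j)"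
proof (cases "l = 0")
  case True
  have "M k j = 0" if "k \<in> K" "j \<in> J" for k j
  proof -
    have "(\<Sum>k\<in>K. (M k j)\<^sup>2) \<le> 0"
      using bound[of "\<lambda>i. of_bool (i = j)"] True \<open>finite J\<close> \<open>j \<in> J\<close> by (simp add: if_distrib cong: if_cong)
    then have "(\<Sum>k\<in>K. (M k j)\<^sup>2) = 0"
      by (simp add: order_antisym sum_nonneg)
    then show ?thesis
      using \<open>finite K\<close> \<open>k \<in> K\<close> by (simp add: sum_nonneg_eq_0_iff)
  qed
  then show ?thesis
    by (intro exI[of _ "\<lambda>k j. 0"]) (auto simp: opnorm_le1_def intro: sum_nonneg)
next
  case False
  with \<open>0 \<le> l\<close> have "0 < l" by simp
  have "opnorm_le1 K J (\<lambda>k j. M k j / l)"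
    unfolding opnorm_le1_def
  proof
    fix x :: "nat \<Rightarrow> real"
    have "(\<Sum>k\<in>K. (\<Sum>j\<in>J. M k j / l * x j)\<^sup>2) = (\<Sum>k\<in>K. (\<Sum>j\<in>J. M k j * x j)\<^sup>2) / l\<^sup>2"
      by (simp add: sum_divide_distrib[symmetric] power_divide)
    also have "\<dots> \<le> (\<Sum>j\<in>J. (x j)\<^sup>2)"
      using bound[of x] \<open>0 < l\<close> by (simp add: field_simps)
    finally show "(\<Sum>k\<in>K. (\<Sum>j\<in>J. M k j / l * x j)\<^sup>2) \<le> (\<Sum>j\<in>J. (x j)\<^sup>2)" .
  qed
  then show ?thesis
    using \<open>0 < l\<close> by (intro exI[of _ "\<lambda>k j. M k j / l"]) auto
qed

lemma opnorm_le1_scale: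
  assumes E: "opnorm_le1 K J E"
    and s: "\<And>k. k \<in> K \<Longrightarrow> \<bar>s k\<bar> \<le> 1" and t: "\<And>j. j \<in> J \<Longrightarrow> \<bar>t j\<bar> \<le> 1"
  shows "opnorm_le1 K J (\<lambda>k j. s k * E k j * t j)"
  unfolding opnorm_le1_def
proof
  fix x :: "nat \<Rightarrow> real"
  have "(\<Sum>k\<in>K. (\<Sum>j\<in>J. s k * E k j * t j * x j)\<^sup>2) = (\<Sum>k\<in>K. (s k)\<^sup>2 * (\<Sum>j\<in>J. E k j * (t j * x j))\<^sup>2)"
    by (simp add: sum_distrib_left power_mult_distrib[symmetric] mult.assoc)
  also have "\<dots> \<le> (\<Sum>k\<in>K. (\<Sum>j\<in>J. E k j * (t j * x j))\<^sup>2)"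
    using s by (intro sum_mono mult_left_le_one_le) (auto simp: abs_square_le_1)
  also have "\<dots> \<le> (\<Sum>j\<in>J. (t j * x j)\<^sup>2)"
    using E by (simp add: opnorm_le1_def)
  also have "\<dots> \<le> (\<Sum>j\<in>J. (x j)\<^sup>2)"
    using t by (intro sum_mono) (simp add: power_mult_distrib abs_square_le_1 mult_left_le_one_le)
  finally show "(\<Sum>k\<in>K. (\<Sum>j\<in>J. s k * E k j * t j * x j)\<^sup>2) \<le> (\<Sum>j\<in>J. (x j)\<^sup>2)" .
qed

section \<open>The rescaled Fourier basis\<close>

text \<open>The mode \<open>partner n\<close> has the frequency of mode \<open>n\<close>, with cosine and sine exchanged.\<close>

definition partner :: "nat \<Rightarrow> nat" where
  "partner n = (if n = 0 then 0 else if odd n then n + 1 else n - 1)"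

definition partner_sign :: "nat \<Rightarrow> real" where
  "partner_sign n = (if odd n then -1 else 1)"

lemma beta_0 [simp]: "beta 0 = 0"
  by (simp add: beta_def)

lemma beta_partner [simp]: "beta (partner n) = beta n"
  unfolding partner_def beta_def by (auto elim!: oddE evenE)

lemma partner_partner [simp]: "partner (partner n) = n"
  unfolding partner_def by auto

lemma inj_partner: "inj partner"
  by (metis injI partner_partner)

lemma abs_partner_sign [simp]: "\<bar>partner_sign n\<bar> = 1"
  by (simp add: partner_sign_def)

lemma partner_sign_square [simp]: "partner_sign n * partner_sign n = 1"
  by (simp add: partner_sign_def)

lemma integral_cos_period:
  fixes w \<theta> :: real and k :: int
  assumes "0 < w"
  shows "integral {0..2 * pi / w} (\<lambda>s. cos (k * w * s - \<theta>)) = (if k = 0 then 2 * pi / w * cos \<theta> else 0)"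
proof (cases "k = 0")
  case False
  with assms have kw: "k * w \<noteq> 0" by simp
  have "((\<lambda>s. cos (k * w * s - \<theta>)) has_integral
          sin (k * w * (2 * pi / w) - \<theta>) / (k * w) - sin (k * w * 0 - \<theta>) / (k * w)) {0..2 * pi / w}"
    using assms kw
    by (intro fundamental_theorem_of_calculus)
      (auto simp: has_real_derivative_iff_has_vector_derivative[symmetric] intro!: derivative_eq_intros)
  moreover have "k * w * (2 * pi / w) = 2 * pi * k"
    using assms by simp
  then have "sin (k * w * (2 * pi / w) - \<theta>) = sin (- \<theta>)"
    by (simp add: sin_diff)
  ultimately show ?thesis
    using False by (simp add: integral_unique)
qed (use assms in simp)

locale rescaled_circle =
  fixes R0 p0 :: real
  assumes R0_pos: "0 < R0" and scale_pos: "0 < 1 + p0"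
begin

abbreviation L :: real where "L \<equiv> Lp R0 p0"

abbreviation \<Theta> :: "nat \<Rightarrow> real \<Rightarrow> real" where "\<Theta> \<equiv> Theta_t R0 p0"

definition freq :: real where "freq = 1 / (R0 * (1 + p0))"

definition amp :: real where "amp = 1 / sqrt (2 * pi * R0)"

definition phase :: "nat \<Rightarrow> real" where "phase n = (if n \<noteq> 0 \<and> even n then pi / 2 else 0)"

definition sqnorm :: "nat \<Rightarrow> real" where "sqnorm n = (if n = 0 then 1 + p0 else (1 + p0) / 2)"

lemma freq_pos: "0 < freq"
  using R0_pos scale_pos by (simp add: freq_def)

lemma L_eq: "L = 2 * pi / freq"
  using R0_pos scale_pos by (simp add: freq_def Lp_def)

lemma L_pos: "0 < L"
  using freq_pos by (simp add: L_eq)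

lemma amp_square_L: "amp\<^sup>2 * L = 1 + p0"
  using R0_pos scale_pos by (simp add: amp_def Lp_def power_divide)

lemma sqnorm_pos: "0 < sqnorm n"
  using scale_pos by (simp add: sqnorm_def)

lemma sqnorm_le: "sqnorm n \<le> 1 + p0"
  using scale_pos by (simp add: sqnorm_def)

lemma Theta_t_eq:
  "\<Theta> n s = amp * (if n = 0 \<or> odd n then cos (beta n * freq * s) else sin (beta n * freq * s))"
proof -
  have arg: "beta n * (s / (1 + p0)) / R0 = beta n * freq * s"
    using R0_pos scale_pos by (simp add: freq_def field_simps)
  show ?thesis
    unfolding Theta_t_def Theta_def arg by (simp add: amp_def)
qed

lemma Theta_t_phase: "\<Theta> n s = amp * cos (beta n * freq * s - phase n)"
  by (simp add: Theta_t_eq phase_def cos_diff)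

lemma Theta_t_product:
  "\<Theta> m s * \<Theta> n s = amp\<^sup>2 / 2 *
     (cos (real_of_int (int ((m + 1) div 2) - int ((n + 1) div 2)) * freq * s - (phase m - phase n))
      + cos (real_of_int (int ((m + 1) div 2) + int ((n + 1) div 2)) * freq * s - (phase m + phase n)))"
proof -
  have args: "(beta m * freq * s - phase m) - (beta n * freq * s - phase n)
      = real_of_int (int ((m + 1) div 2) - int ((n + 1) div 2)) * freq * s - (phase m - phase n)"
    "(beta m * freq * s - phase m) + (beta n * freq * s - phase n)
      = real_of_int (int ((m + 1) div 2) + int ((n + 1) div 2)) * freq * s - (phase m + phase n)"
    by (simp_all add: beta_def algebra_simps)
  have "\<Theta> m s * \<Theta> n s = amp\<^sup>2 * (cos (beta m * freq * s - phase m) * cos (beta n * freq * s - phase n))"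
    by (simp add: Theta_t_phase power2_eq_square)
  then show ?thesis
    unfolding cos_times_cos args by simp
qed

lemma Theta_t_orthogonal:
  "integral {0..L} (\<lambda>s. \<Theta> m s * \<Theta> n s) = (if m = n then sqnorm m else 0)"
proof -
  define a where "a = (m + 1) div 2"
  define b where "b = (n + 1) div 2"
  define I where "I k \<theta> = integral {0..L} (\<lambda>s. cos (real_of_int k * freq * s - \<theta>))" for k \<theta>
  have I: "I k \<theta> = (if k = 0 then L * cos \<theta> else 0)" for k \<theta>
    unfolding I_def L_eq using integral_cos_period[OF freq_pos] by simp
  have "integral {0..L} (\<lambda>s. \<Theta> m s * \<Theta> n s)
      = amp\<^sup>2 / 2 * (I (int a - int b) (phase m - phase n) + I (int a + int b) (phase m + phase n))"
    unfolding Theta_t_product I_def a_def b_def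
    by (subst integral_add[symmetric]) (auto intro!: integrable_continuous_interval continuous_intros)
  also have "\<dots> = (if m = n then sqnorm m else 0)"
  proof (cases "m = n")
    case True
    then show ?thesis
      using amp_square_L by (auto simp: I a_def b_def sqnorm_def phase_def)
  next
    case False
    moreover have "cos (phase m - phase n) = 0" if "a = b"
    proof -
      have "m \<noteq> 0 \<and> n \<noteq> 0 \<and> (odd m \<longleftrightarrow> even n)"
        using that False unfolding a_def b_def by presburger
      then show ?thesis
        by (auto simp: phase_def)
    qed
    ultimately show ?thesis
      by (auto simp: I a_def b_def)
  qed
  finally show ?thesis .
qed

lemma Theta_t_has_derivative:
  "(\<Theta> n has_real_derivative partner_sign n * beta n * freq * \<Theta> (partner n) s) (at s)"
proof -
  consider "n = 0" | "odd n" | "n \<noteq> 0" "even n"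
    by blast
  then show ?thesis
  proof cases
    case 1
    then show ?thesis
      by (simp add: Theta_t_eq[abs_def])
  next
    case 2
    then have "partner n = n + 1" "n \<noteq> 0"
      by (auto simp: partner_def odd_pos)
    with 2 beta_partner[of n] show ?thesis
      unfolding Theta_t_eq[abs_def]
      by (auto intro!: derivative_eq_intros simp: partner_sign_def algebra_simps)
  next
    case 3
    then have "partner n = n - 1" "odd (n - 1)"
      by (auto simp: partner_def)
    with 3 beta_partner[of n] show ?thesis
      unfolding Theta_t_eq[abs_def]
      by (auto intro!: derivative_eq_intros simp: partner_sign_def algebra_simps)
  qed
qed

lemma Theta_t_partner_has_derivative:
  "(\<Theta> (partner k) has_real_derivative partner_sign (partner k) * beta k * freq * \<Theta> k s) (at s within S)"
  using Theta_t_has_derivative[of "partner k" s] by (simp add: has_field_derivative_at_within)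

lemma Theta_t_continuous: "continuous_on S (\<Theta> n)"
  using Theta_t_has_derivative by (meson DERIV_isCont continuous_at_imp_continuous_on)

lemma Theta_t_periodic: "\<Theta> n L = \<Theta> n 0"
proof -
  have "beta n * freq * L = 2 * real ((n + 1) div 2) * pi"
    using freq_pos by (simp add: L_eq beta_def)
  then show ?thesis
    by (simp add: Theta_t_phase cos_diff)
qed

lemma Theta_t_product_integrable: "(\<lambda>s. \<Theta> m s * \<Theta> n s) integrable_on {0..L}"
  by (intro integrable_continuous_interval continuous_intros Theta_t_continuous)

lemma bessel_Theta_t:
  assumes "finite M" and F2: "(\<lambda>s. (F s)\<^sup>2) integrable_on {0..L}"
    and F\<Theta>: "\<And>m. m \<in> M \<Longrightarrow> (\<lambda>s. F s * \<Theta> m s) integrable_on {0..L}"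
  shows "(\<Sum>m\<in>M. (integral {0..L} (\<lambda>s. F s * \<Theta> m s))\<^sup>2) \<le> (1 + p0) * integral {0..L} (\<lambda>s. (F s)\<^sup>2)"
proof -
  have "(\<Sum>m\<in>M. (integral {0..L} (\<lambda>s. F s * \<Theta> m s))\<^sup>2)
      \<le> (\<Sum>m\<in>M. (1 + p0) * ((integral {0..L} (\<lambda>s. F s * \<Theta> m s))\<^sup>2 / sqnorm m))"
  proof (rule sum_mono)
    fix m
    define c where "c = (integral {0..L} (\<lambda>s. F s * \<Theta> m s))\<^sup>2"
    have "c = sqnorm m * (c / sqnorm m)"
      using sqnorm_pos[of m] by simp
    also have "\<dots> \<le> (1 + p0) * (c / sqnorm m)"
      by (intro mult_right_mono sqnorm_le divide_nonneg_pos sqnorm_pos) (simp add: c_def)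
    finally show "c \<le> (1 + p0) * (c / sqnorm m)" .
  qed
  also have "\<dots> \<le> (1 + p0) * integral {0..L} (\<lambda>s. (F s)\<^sup>2)"
    unfolding sum_distrib_left[symmetric] using scale_pos
    by (intro mult_left_mono bessel_inequality[OF \<open>finite M\<close> _ _ _ F2 F\<Theta>])
      (auto simp: Theta_t_product_integrable Theta_t_orthogonal sqnorm_pos)
  finally show ?thesis .
qed

lemma integral_square_Theta_t_sum_le:
  assumes "finite J" and "inj_on \<sigma> J"
  shows "integral {0..L} (\<lambda>s. (\<Sum>j\<in>J. a j * \<Theta> (\<sigma> j) s)\<^sup>2) \<le> (1 + p0) * (\<Sum>j\<in>J. (a j)\<^sup>2)"
proof -
  have "integral {0..L} (\<lambda>s. (\<Sum>j\<in>J. a j * \<Theta> (\<sigma> j) s)\<^sup>2) = (\<Sum>j\<in>J. (a j)\<^sup>2 * sqnorm (\<sigma> j))"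
    using \<open>inj_on \<sigma> J\<close>
    by (intro integral_square_orthogonal_sum[OF \<open>finite J\<close>])
      (auto simp: Theta_t_product_integrable Theta_t_orthogonal inj_on_eq_iff)
  also have "\<dots> \<le> (1 + p0) * (\<Sum>j\<in>J. (a j)\<^sup>2)"
    unfolding sum_distrib_left using sqnorm_le
    by (intro sum_mono) (simp add: mult.commute mult_right_mono)
  finally show ?thesis .
qed

lemma sum_integral_multiplier_Theta_t:
  fixes u :: "real \<Rightarrow> real"
  assumes "finite J"
    and u: "u \<in> borel_measurable (lebesgue_on {0..L})" and bound: "\<And>s. s \<in> {0..L} \<Longrightarrow> \<bar>u s\<bar> \<le> U"
  shows "(\<Sum>j\<in>J. integral {0..L} (\<lambda>s. u s * \<Theta> (\<sigma> j) s * \<Theta> m s) * x j)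
           = integral {0..L} (\<lambda>s. u s * (\<Sum>j\<in>J. x j * \<Theta> (\<sigma> j) s) * \<Theta> m s)"
proof -
  have "integral {0..L} (\<lambda>s. u s * (\<Sum>j\<in>J. x j * \<Theta> (\<sigma> j) s) * \<Theta> m s)
      = integral {0..L} (\<lambda>s. \<Sum>j\<in>J. u s * \<Theta> (\<sigma> j) s * \<Theta> m s * x j)"
    by (simp add: sum_distrib_left sum_distrib_right ac_simps)
  also have "\<dots> = (\<Sum>j\<in>J. integral {0..L} (\<lambda>s. u s * \<Theta> (\<sigma> j) s * \<Theta> m s * x j))"
    by (rule integral_sum[OF \<open>finite J\<close>], rule integrable_on_mult_left, unfold mult.assoc)
      (intro integrable_bounded_measurable_mult_continuous[OF u bound] continuous_intros Theta_t_continuous)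
  finally show ?thesis
    by simp
qed

lemma multiplier_matrix_bound:
  fixes u :: "real \<Rightarrow> real"
  assumes K: "finite K" "inj_on \<tau> K" and J: "finite J" "inj_on \<sigma> J"
    and u: "u \<in> borel_measurable (lebesgue_on {0..L})" and bound: "\<And>s. s \<in> {0..L} \<Longrightarrow> \<bar>u s\<bar> \<le> U"
  shows "(\<Sum>k\<in>K. (\<Sum>j\<in>J. integral {0..L} (\<lambda>s. u s * \<Theta> (\<sigma> j) s * \<Theta> (\<tau> k) s) * x j)\<^sup>2)
           \<le> ((1 + p0) * U)\<^sup>2 * (\<Sum>j\<in>J. (x j)\<^sup>2)"
proof -
  define h where "h s = (\<Sum>j\<in>J. x j * \<Theta> (\<sigma> j) s)" for s
  have h_cont: "continuous_on {0..L} h"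
    unfolding h_def by (intro continuous_intros Theta_t_continuous)
  note uh2 = integral_square_bounded_mult_le[OF u bound h_cont]
  have uh\<Theta>: "(\<lambda>s. u s * h s * \<Theta> m s) integrable_on {0..L}" for m
    unfolding mult.assoc
    by (intro integrable_bounded_measurable_mult_continuous[OF u bound] continuous_intros h_cont Theta_t_continuous)
  have "(\<Sum>k\<in>K. (\<Sum>j\<in>J. integral {0..L} (\<lambda>s. u s * \<Theta> (\<sigma> j) s * \<Theta> (\<tau> k) s) * x j)\<^sup>2)
      = (\<Sum>m\<in>\<tau> ` K. (integral {0..L} (\<lambda>s. u s * h s * \<Theta> m s))\<^sup>2)"
    using sum_integral_multiplier_Theta_t[OF J(1) u bound, of \<sigma> _ x, folded h_def]
    by (simp add: sum.reindex[OF K(2)])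
  also have "\<dots> \<le> (1 + p0) * integral {0..L} (\<lambda>s. (u s * h s)\<^sup>2)"
    using K(1) by (intro bessel_Theta_t uh2(1) uh\<Theta>) auto
  also have "\<dots> \<le> (1 + p0) * (U\<^sup>2 * integral {0..L} (\<lambda>s. (h s)\<^sup>2))"
    using scale_pos uh2(2) by (simp add: mult_left_mono)
  also have "\<dots> \<le> (1 + p0) * (U\<^sup>2 * ((1 + p0) * (\<Sum>j\<in>J. (x j)\<^sup>2)))"
    unfolding h_def using scale_pos
    by (intro mult_left_mono integral_square_Theta_t_sum_le J) auto
  also have "\<dots> = ((1 + p0) * U)\<^sup>2 * (\<Sum>j\<in>J. (x j)\<^sup>2)"
    by (simp add: power2_eq_square)
  finally show ?thesis .
qed

lemma multiplier_matrix_factor: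
  fixes u :: "real \<Rightarrow> real"
  assumes K: "finite K" "inj_on \<tau> K" and J: "finite J" "inj_on \<sigma> J"
    and u: "u \<in> borel_measurable (lebesgue_on {0..L})" and bound: "\<And>s. s \<in> {0..L} \<Longrightarrow> \<bar>u s\<bar> \<le> U"
  shows "\<exists>E. opnorm_le1 K J E \<and>
           (\<forall>k\<in>K. \<forall>j\<in>J. integral {0..L} (\<lambda>s. u s * \<Theta> (\<sigma> j) s * \<Theta> (\<tau> k) s) = (1 + p0) * U * E k j)"
proof (rule opnorm_le1_factor[OF K(1) J(1)])
  show "0 \<le> (1 + p0) * U"
    using bound[of 0] L_pos scale_pos by auto
qed (rule multiplier_matrix_bound[OF K J u bound])

lemma integral_beta_Theta_t_by_parts:
  assumes fg: "periodic_with_deriv L f g" and g: "g absolutely_integrable_on {0..L}"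
  shows "integral {0..L} (\<lambda>s. f s * (beta k * \<Theta> k s))
           = - partner_sign (partner k) / freq * integral {0..L} (\<lambda>s. g s * \<Theta> (partner k) s)"
proof -
  have "integral {0..L} (\<lambda>s. partner_sign (partner k) * beta k * freq * \<Theta> k s * f s)
      = - integral {0..L} (\<lambda>s. g s * \<Theta> (partner k) s)"
    using L_pos
    by (intro periodic_integration_by_parts[OF _ fg g] Theta_t_partner_has_derivative
        continuous_intros Theta_t_continuous Theta_t_periodic) auto
  moreover have "(\<lambda>s. partner_sign (partner k) * beta k * freq * \<Theta> k s * f s)
      = (\<lambda>s. (partner_sign (partner k) * freq) * (f s * (beta k * \<Theta> k s)))"
    by (simp add: fun_eq_iff ac_simps)
  ultimately have key: "partner_sign (partner k) * freq * integral {0..L} (\<lambda>s. f s * (beta k * \<Theta> k s))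
      = - integral {0..L} (\<lambda>s. g s * \<Theta> (partner k) s)"
    by (simp only: integral_mult_right)
  have "integral {0..L} (\<lambda>s. f s * (beta k * \<Theta> k s))
      = partner_sign (partner k) * (partner_sign (partner k) * freq * integral {0..L} (\<lambda>s. f s * (beta k * \<Theta> k s))) / freq"
    using freq_pos by (simp add: mult.assoc[symmetric])
  then show ?thesis
    unfolding key by simp
qed

lemma H1_Theta_t_coefficients_bound:
  assumes "finite K" and H: "H1_circle L f g"
  shows "sqrt (\<Sum>k\<in>K. (integral {0..L} (\<lambda>s. f s * (beta k * \<Theta> k s)))\<^sup>2)
           \<le> sqrt (1 + p0) / freq * L2norm_circle L g"
proof -
  have fg: "periodic_with_deriv L f g" and g2: "(\<lambda>s. (g s)\<^sup>2) integrable_on {0..L}"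
    using H by (simp_all add: H1_circle_def)
  have "(g has_integral (f L - f 0)) {0..L}"
    using fg L_pos by (simp add: periodic_with_deriv_def)
  then have g: "g absolutely_integrable_on {0..L}"
    by (intro square_integrable_imp_absolutely_integrable integrable_imp_measurable g2) blast
  have g2_nonneg: "0 \<le> integral {0..L} (\<lambda>s. (g s)\<^sup>2)"
    by (rule integral_nonneg[OF g2]) simp
  have "(\<Sum>k\<in>K. (integral {0..L} (\<lambda>s. f s * (beta k * \<Theta> k s)))\<^sup>2)
      = (\<Sum>m\<in>partner ` K. (integral {0..L} (\<lambda>s. g s * \<Theta> m s))\<^sup>2) / freq\<^sup>2"
    by (simp add: integral_beta_Theta_t_by_parts[OF fg g] sum.reindex inj_on_subset[OF inj_partner]
        sum_divide_distrib power_mult_distrib power_divide power2_eq_square[of "partner_sign _"])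
  also have "\<dots> \<le> (1 + p0) * integral {0..L} (\<lambda>s. (g s)\<^sup>2) / freq\<^sup>2"
    using \<open>finite K\<close>
    by (intro divide_right_mono bessel_Theta_t g2 integrable_absolutely_integrable_mult_continuous[OF g]
        Theta_t_continuous) auto
  also have "\<dots> = (sqrt (1 + p0) / freq * L2norm_circle L g)\<^sup>2"
    using scale_pos g2_nonneg by (simp add: L2norm_circle_def power_mult_distrib power_divide)
  finally show ?thesis
    by (rule real_le_lsqrt[rotated]) (use scale_pos freq_pos g2_nonneg in \<open>simp add: L2norm_circle_def\<close>)
qed

lemma integral_Theta_t_pair_by_parts:
  assumes fg: "periodic_with_deriv L f g" and g: "g absolutely_integrable_on {0..L}"
  shows "integral {0..L} (\<lambda>s. f s * \<Theta> j s * (beta k * \<Theta> k s))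
           = - partner_sign (partner k) / freq * integral {0..L} (\<lambda>s. g s * \<Theta> j s * \<Theta> (partner k) s)
             - partner_sign (partner k) * partner_sign j * beta j
                 * integral {0..L} (\<lambda>s. f s * \<Theta> (partner j) s * \<Theta> (partner k) s)"
proof -
  define I where "I = integral {0..L} (\<lambda>s. f s * \<Theta> j s * (beta k * \<Theta> k s))"
  define A where "A = integral {0..L} (\<lambda>s. g s * \<Theta> j s * \<Theta> (partner k) s)"
  define B where "B = integral {0..L} (\<lambda>s. f s * \<Theta> (partner j) s * \<Theta> (partner k) s)"
  define \<sigma> where "\<sigma> = partner_sign (partner k)"
  have f_cont: "continuous_on {0..L} f"
    by (rule continuous_on_primitive[where g = g]) (use fg in \<open>simp add: periodic_with_deriv_def\<close>)
  have "integral {0..L} (\<lambda>s. (partner_sign j * beta j * freq * \<Theta> (partner j) s * \<Theta> (partner k) s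
          + \<sigma> * beta k * freq * \<Theta> k s * \<Theta> j s) * f s)
      = - integral {0..L} (\<lambda>s. g s * (\<Theta> j s * \<Theta> (partner k) s))"
    unfolding \<sigma>_def using L_pos
    by (intro periodic_integration_by_parts[OF _ fg g] DERIV_mult
        Theta_t_has_derivative[THEN has_field_derivative_at_within] Theta_t_partner_has_derivative
        continuous_intros Theta_t_continuous) (auto simp: Theta_t_periodic)
  moreover have "integral {0..L} (\<lambda>s. (partner_sign j * beta j * freq * \<Theta> (partner j) s * \<Theta> (partner k) s
          + \<sigma> * beta k * freq * \<Theta> k s * \<Theta> j s) * f s)
      = partner_sign j * beta j * freq * B + \<sigma> * freq * I"
  proof -
    have "(\<lambda>s. (partner_sign j * beta j * freq * \<Theta> (partner j) s * \<Theta> (partner k) s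
          + \<sigma> * beta k * freq * \<Theta> k s * \<Theta> j s) * f s)
        = (\<lambda>s. (partner_sign j * beta j * freq) * (f s * \<Theta> (partner j) s * \<Theta> (partner k) s)
          + (\<sigma> * freq) * (f s * \<Theta> j s * (beta k * \<Theta> k s)))"
      by (simp add: fun_eq_iff algebra_simps)
    then show ?thesis
      unfolding B_def I_def
      by (simp only: integral_add integral_mult_right integrable_on_mult_right
          integrable_continuous_interval continuous_intros f_cont Theta_t_continuous)
  qed
  ultimately have key: "\<sigma> * freq * I = - A - partner_sign j * beta j * freq * B"
    by (simp add: A_def mult.assoc)
  have "I = \<sigma> * (\<sigma> * freq * I) / freq"
    using freq_pos by (simp add: \<sigma>_def mult.assoc[symmetric])
  also have "\<dots> = - \<sigma> / freq * A - \<sigma> * partner_sign j * beta j * B"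
    unfolding key using freq_pos by (simp add: field_simps)
  finally show ?thesis
    by (simp add: I_def A_def B_def \<sigma>_def)
qed

lemma Theta_t_pair_matrix_decomposition:
  assumes K: "finite K" and J: "finite J" and fg: "periodic_with_deriv L f g"
    and f_bound: "\<And>x. \<bar>f x\<bar> \<le> Mf" and g_bound: "\<And>x. \<bar>g x\<bar> \<le> Mg"
  shows "\<exists>E1 E2. opnorm_le1 K J E1 \<and> opnorm_le1 K J E2 \<and>
           (\<forall>k\<in>K. \<forall>j\<in>J. integral {0..L} (\<lambda>s. f s * \<Theta> j s * (beta k * \<Theta> k s))
              = (1 + p0) / freq * Mg * E1 k j + (1 + p0) * Mf * beta j * E2 k j)"
proof -
  have "(g has_integral (f L - f 0)) {0..L}"
    using fg L_pos by (simp add: periodic_with_deriv_def)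
  then have g_meas: "g \<in> borel_measurable (lebesgue_on {0..L})"
    by (intro integrable_imp_measurable) blast
  have g: "g absolutely_integrable_on {0..L}"
    by (rule measurable_bounded_by_integrable_imp_absolutely_integrable[OF g_meas, where g = "\<lambda>_. Mg"])
      (auto simp: g_bound)
  have f_meas: "f \<in> borel_measurable (lebesgue_on {0..L})"
    by (intro continuous_imp_measurable_on_sets_lebesgue continuous_on_primitive[where g = g])
      (use fg in \<open>auto simp: periodic_with_deriv_def\<close>)
  have inj: "inj_on partner S" for S
    using inj_partner by (rule inj_on_subset) simp
  obtain EA where EA: "opnorm_le1 K J EA"
    "\<And>k j. k \<in> K \<Longrightarrow> j \<in> J \<Longrightarrow>
       integral {0..L} (\<lambda>s. g s * \<Theta> j s * \<Theta> (partner k) s) = (1 + p0) * Mg * EA k j"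
    using multiplier_matrix_factor[OF K inj J inj_on_id2 g_meas g_bound] by auto
  obtain EB where EB: "opnorm_le1 K J EB"
    "\<And>k j. k \<in> K \<Longrightarrow> j \<in> J \<Longrightarrow>
       integral {0..L} (\<lambda>s. f s * \<Theta> (partner j) s * \<Theta> (partner k) s) = (1 + p0) * Mf * EB k j"
    using multiplier_matrix_factor[OF K inj J inj f_meas f_bound] by auto
  show ?thesis
  proof (intro exI conjI ballI)
    show "opnorm_le1 K J (\<lambda>k j. - partner_sign (partner k) * EA k j * 1)"
      by (rule opnorm_le1_scale[OF EA(1)]) auto
    show "opnorm_le1 K J (\<lambda>k j. - partner_sign (partner k) * EB k j * partner_sign j)"
      by (rule opnorm_le1_scale[OF EB(1)]) auto
    fix k j
    assume "k \<in> K" "j \<in> J"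
    then show "integral {0..L} (\<lambda>s. f s * \<Theta> j s * (beta k * \<Theta> k s))
        = (1 + p0) / freq * Mg * (- partner_sign (partner k) * EA k j * 1)
          + (1 + p0) * Mf * beta j * (- partner_sign (partner k) * EB k j * partner_sign j)"
      unfolding integral_Theta_t_pair_by_parts[OF fg g] EA(2)[OF \<open>k \<in> K\<close> \<open>j \<in> J\<close>] EB(2)[OF \<open>k \<in> K\<close> \<open>j \<in> J\<close>]
      using freq_pos by (simp add: field_simps)
  qed
qed

lemma Theta_t_pair_bounded_decomposition:
  assumes "finite K" and "finite J" and fg: "periodic_with_deriv L f g"
    and f_bound: "\<forall>x. \<bar>f x\<bar> \<le> Mf" and g_bound: "AE x in lborel. \<bar>g x\<bar> \<le> Mg"
  shows "\<exists>a1 a2 E1 E2. opnorm_le1 K J E1 \<and> opnorm_le1 K J E2 \<and>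
           \<bar>a1\<bar> \<le> ((1 + p0) + (1 + p0) / freq) * Mg \<and> \<bar>a2\<bar> \<le> ((1 + p0) + (1 + p0) / freq) * Mf \<and>
           (\<forall>k\<in>K. \<forall>j\<in>J. integral {0..L} (\<lambda>s. f s * \<Theta> j s * (beta k * \<Theta> k s))
              = a1 * E1 k j + a2 * beta j * E2 k j)"
proof -
  obtain g' where fg': "periodic_with_deriv L f g'" and g'_bound: "\<And>x. \<bar>g' x\<bar> \<le> Mg"
    using periodic_with_deriv_bounded_deriv[OF fg g_bound] by blast
  obtain E1 E2 where "opnorm_le1 K J E1" "opnorm_le1 K J E2"
    "\<forall>k\<in>K. \<forall>j\<in>J. integral {0..L} (\<lambda>s. f s * \<Theta> j s * (beta k * \<Theta> k s))
       = (1 + p0) / freq * Mg * E1 k j + (1 + p0) * Mf * beta j * E2 k j"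
    using Theta_t_pair_matrix_decomposition[OF assms(1,2) fg' f_bound[rule_format] g'_bound] by blast
  moreover have "\<bar>(1 + p0) / freq * Mg\<bar> \<le> ((1 + p0) + (1 + p0) / freq) * Mg"
    "\<bar>(1 + p0) * Mf\<bar> \<le> ((1 + p0) + (1 + p0) / freq) * Mf"
  proof -
    have "0 \<le> Mg" "0 \<le> Mf" "0 < (1 + p0) / freq"
      using AE_abs_le_imp_nonneg[OF g_bound] f_bound[rule_format, of 0] scale_pos freq_pos by auto
    then have abs_eq: "\<bar>(1 + p0) / freq * Mg\<bar> = (1 + p0) / freq * Mg" "\<bar>(1 + p0) * Mf\<bar> = (1 + p0) * Mf"
      using scale_pos freq_pos by (simp_all add: abs_of_nonneg)
    have le: "(1 + p0) / freq \<le> (1 + p0) + (1 + p0) / freq" "1 + p0 \<le> (1 + p0) + (1 + p0) / freq"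
      using scale_pos \<open>0 < (1 + p0) / freq\<close> by linarith+
    show "\<bar>(1 + p0) / freq * Mg\<bar> \<le> ((1 + p0) + (1 + p0) / freq) * Mg"
      unfolding abs_eq by (rule mult_right_mono[OF le(1) \<open>0 \<le> Mg\<close>])
    show "\<bar>(1 + p0) * Mf\<bar> \<le> ((1 + p0) + (1 + p0) / freq) * Mf"
      unfolding abs_eq by (rule mult_right_mono[OF le(2) \<open>0 \<le> Mf\<close>])
  qed
  ultimately show ?thesis
    by blast
qed

end

theorem lemma6p6:
  fixes R0 p0 :: real
  assumes "R0 > 0" and "p0 > - 1 / 2"
  shows "(\<exists>C. \<forall>N1::nat. \<forall>f g. N1 \<ge> 4 \<longrightarrow> H1_circle (Lp R0 p0) f g \<longrightarrow>
            sqrt (\<Sum>k\<in>{3..N1-1}.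
                    (integral {0..Lp R0 p0} (\<lambda>s. f s * (beta k * Theta_t R0 p0 k s)))\<^sup>2)
            \<le> C * L2norm_circle (Lp R0 p0) g)
       \<and> (\<exists>C. \<forall>N1::nat. \<forall>f g Mf Mg. N1 \<ge> 4 \<longrightarrow> periodic_with_deriv (Lp R0 p0) f g \<longrightarrow>
            (\<forall>x. \<bar>f x\<bar> \<le> Mf) \<longrightarrow> (AE x in lborel. \<bar>g x\<bar> \<le> Mg) \<longrightarrow>
            (\<exists>a1 a2 E1 E2.
               opnorm_le1 {3..N1-1} {0..N1-1} E1 \<and> opnorm_le1 {3..N1-1} {0..N1-1} E2 \<and>
               \<bar>a1\<bar> \<le> C * Mg \<and> \<bar>a2\<bar> \<le> C * Mf \<and>
               (\<forall>k\<in>{3..N1-1}. \<forall>j\<in>{0..N1-1}.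
                  integral {0..Lp R0 p0} (\<lambda>s. f s * Theta_t R0 p0 j s * (beta k * Theta_t R0 p0 k s))
                  = a1 * E1 k j + a2 * beta j * E2 k j)))"
proof -
  interpret rescaled_circle R0 p0
    using assms by unfold_locales auto
  show ?thesis
    by (intro conjI; rule exI, intro allI impI;
        rule H1_Theta_t_coefficients_bound Theta_t_pair_bounded_decomposition; simp)
qed

end
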